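(* Let $n \ge 2$ and $1 \le r < n$ be integers, let $S^0 \in \mathbb{R}^{n\times n}$ be a symmetric matrix, and define $f:\mathbb{R}^{n\times r}\to\mathbb{R}$ by $f(V) = \|VV^\top - S^0\|_F^2$. Suppose $\hat V \in \mathbb{R}^{n\times r}$ is a local minimizer of $f$ such that the matrix $\hat S = \hat V\hat V^\top$ satisfies $\operatorname{rank}(\hat S) < r$. Then $\hat V$ is a global minimizer of $f$ over $\mathbb{R}^{n\times r}$, and $\hat S$ is a global minimizer of the problem $\min_{S} \|S - S^0\|_F^2$ subject to $S \succeq 0$ (and hence also of this problem with the additional constraint $\operatorname{rank}(S)\le r$).
   Context: $\|\cdot\|_F$ denotes the Frobenius norm; $S\succeq 0$ means $S$ is symmetric positive semidefinite. *)

theory Defs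
  imports "HOL-Analysis.Analysis"
begin

definition frob_norm :: "real^'n^'m \<Rightarrow> real" where
  "frob_norm A = sqrt (\<Sum>i\<in>UNIV. \<Sum>j\<in>UNIV. (A $ i $ j)^2)"

definition psd :: "real^'n^'n \<Rightarrow> bool" where
  "psd S \<longleftrightarrow> transpose S = S \<and> (\<forall>x. 0 \<le> x \<bullet> (S *v x))"

definition fobj :: "real^'n^'n \<Rightarrow> real^'r^'n \<Rightarrow> real" where
  "fobj S0 V = (frob_norm (V ** transpose V - S0))^2"

end

theory Submission
  imports Defs
begin

(* A local minimiser Vh with rank (Vh Vh^T) < r has a nonzero w with Vh w = 0. Perturbing Vh by
   t x w^T changes Vh Vh^T only by t^2 |w|^2 x x^T, so second-order optimality makes the residual
   G = Vh Vh^T - S0 positive semidefinite, while scaling Vh by 1 - t gives the first-order condition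
   <G, Vh Vh^T> <= 0. As the PSD cone is self-dual, <S - Vh Vh^T, G> >= 0 for every PSD S, which is
   the variational inequality making Vh Vh^T the point of the cone nearest to S0. Every V V^T is
   PSD, so Vh is also a global minimiser of f. *)

lemma frob_norm_eq_norm: "frob_norm A = norm A"
  unfolding frob_norm_def norm_vec_def L2_set_def
  by (simp add: sum_nonneg)

definition outer_product :: "real^'m \<Rightarrow> real^'n \<Rightarrow> real^'n^'m" where
  "outer_product u v = (\<chi> i j. u$i * v$j)"

lemma outer_product_component [simp]: "outer_product u v $ i $ j = u$i * v$j"
  by (simp add: outer_product_def)

lemma outer_product_mult_vector: "outer_product u v *v x = (v \<bullet> x) *\<^sub>R u"
  by (simp add: vec_eq_iff matrix_vector_mult_def inner_vec_def sum_distrib_left mult_ac)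

lemma inner_outer_product: "A \<bullet> outer_product u v = u \<bullet> (A *v v)"
  by (simp add: inner_vec_def matrix_vector_mult_def sum_distrib_left mult_ac)

lemma symmetric_inner_matrix_vector:
  fixes A :: "real^'n^'n"
  assumes "transpose A = A"
  shows "x \<bullet> (A *v y) = y \<bullet> (A *v x)"
proof -
  have "x \<bullet> (A *v y) = (transpose A *v x) \<bullet> y"
    by (simp only: transpose_matrix_vector dot_lmul_matrix)
  then show ?thesis by (simp only: assms inner_commute)
qed

lemma psd_gram: "psd ((V::real^'r^'n) ** transpose V)"
  unfolding psd_def
proof (intro conjI allI)
  show "transpose (V ** transpose V) = V ** transpose V"
    by (simp add: matrix_transpose_mul)
next
  fix x :: "real^'n"
  have "x \<bullet> ((V ** transpose V) *v x) = (x v* V) \<bullet> (x v* V)"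
    by (simp add: dot_lmul_matrix matrix_vector_mul_assoc[symmetric])
  then show "0 \<le> x \<bullet> ((V ** transpose V) *v x)" by simp
qed

lemma axis_inner_matrix_axis: "axis k 1 \<bullet> (A *v axis l 1) = (A::real^'n^'m)$k$l"
  by (simp add: inner_axis' matrix_vector_mult_basis column_def)

lemma psd_diagonal_zero_imp_row_zero:
  assumes "psd G" and "G$i$i = 0"
  shows "G$i$j = 0"
proof (rule ccontr)
  assume g: "G$i$j \<noteq> 0"
  define t where "t = - (G$j$j + 1) / (2 * G$i$j)"
  define x where "x = axis j 1 + t *\<^sub>R axis i (1::real)"
  have sym: "G$j$i = G$i$j"
    using assms(1) unfolding psd_def by (metis transpose_def vec_lambda_beta)
  have "x \<bullet> (G *v x) = G$j$j + 2 * t * G$i$j"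
    using assms(2) sym
    by (simp add: x_def scaleR_matrix_vector_assoc axis_inner_matrix_axis algebra_simps)
  also have "\<dots> = -1" using g by (simp add: t_def field_simps)
  finally show False using assms(1) unfolding psd_def by (metis neg_0_le_iff_le not_one_le_zero)
qed

lemma psd_diagonal_nonneg: "psd G \<Longrightarrow> 0 \<le> G$i$i"
  unfolding psd_def by (metis axis_inner_matrix_axis)

lemma psd_schur_complement:
  fixes G :: "real^'n^'n" and i :: 'n
  defines "u \<equiv> column i G"
  assumes G: "psd G" and c: "0 < G$i$i"
  shows "psd (G - (1 / G$i$i) *\<^sub>R outer_product u u)"
  unfolding psd_def
proof (intro conjI allI)
  have "transpose G = G" using G unfolding psd_def ..
  then show "transpose (G - (1 / G$i$i) *\<^sub>R outer_product u u) = G - (1 / G$i$i) *\<^sub>R outer_product u u"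
    by (simp add: vec_eq_iff transpose_def)
next
  fix x :: "real^'n"
  have sym: "transpose G = G" using G unfolding psd_def ..
  have u: "u = G *v axis i 1" by (simp add: u_def matrix_vector_mult_basis)
  define b where "b = u \<bullet> x"
  have bx: "x \<bullet> (G *v axis i 1) = b" and bi: "axis i 1 \<bullet> (G *v x) = b"
    using symmetric_inner_matrix_vector[OF sym, of x "axis i 1"] by (simp_all add: b_def u inner_commute)
  (* the Schur complement's form at x is G's form at x - (b / G$i$i) e_i *)
  define y where "y = x - (b / G$i$i) *\<^sub>R axis i 1"
  have "x \<bullet> ((G - (1 / G$i$i) *\<^sub>R outer_product u u) *v x) = x \<bullet> (G *v x) - b\<^sup>2 / G$i$i"
    by (simp add: matrix_vector_mult_diff_rdistrib scaleR_matrix_vector_assoc[symmetric]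
        outer_product_mult_vector inner_diff_right b_def inner_commute power2_eq_square)
  also have "\<dots> = y \<bullet> (G *v y)"
    using c by (simp add: y_def matrix_vector_mult_diff_distrib matrix_vector_mult_scaleR inner_diff
        bx bi axis_inner_matrix_axis power2_eq_square field_simps)
  also have "0 \<le> \<dots>" using G unfolding psd_def by blast
  finally show "0 \<le> x \<bullet> ((G - (1 / G$i$i) *\<^sub>R outer_product u u) *v x)" .
qed

lemma psd_inner_nonneg:
  fixes S G :: "real^'n^'n"
  assumes S: "psd S" and G: "psd G"
  shows "0 \<le> S \<bullet> G"
proof -
  (* induction on the set of nonzero diagonal entries: each Schur complement removes one *)
  have "\<forall>G. psd G \<longrightarrow> {i. G$i$i \<noteq> 0} \<subseteq> D \<longrightarrow> 0 \<le> S \<bullet> G" for D :: "'n set"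
    using finite[of D]
  proof (induction D rule: finite_induct)
    case empty
    have "G = 0" if "psd G" "{i. G$i$i \<noteq> 0} \<subseteq> {}" for G :: "real^'n^'n"
      using that psd_diagonal_zero_imp_row_zero by (auto simp: vec_eq_iff)
    then show ?case by (metis inner_zero_right order.refl)
  next
    case (insert i D)
    show ?case
    proof (intro allI impI)
      fix G :: "real^'n^'n"
      assume G: "psd G" and supp: "{i. G$i$i \<noteq> 0} \<subseteq> insert i D"
      show "0 \<le> S \<bullet> G"
      proof (cases "G$i$i = 0")
        case True
        then show ?thesis using insert.IH G supp by blast
      next
        case False
        then have c: "0 < G$i$i" using psd_diagonal_nonneg[OF G, of i] by simp
        define u where "u = column i G"
        define G' where "G' = G - (1 / G$i$i) *\<^sub>R outer_product u u"
        have G': "psd G'" unfolding G'_def u_def using G c by (rule psd_schur_complement)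
        have "G'$j$j = 0" if "j = i \<or> G$j$j = 0" for j
          using that c psd_diagonal_zero_imp_row_zero[OF G, of j i]
          by (auto simp: G'_def u_def column_def power2_eq_square)
        then have "{j. G'$j$j \<noteq> 0} \<subseteq> D" using supp by blast
        then have "0 \<le> S \<bullet> G'" using insert.IH G' by blast
        moreover have "0 \<le> u \<bullet> (S *v u)" using S unfolding psd_def by blast
        moreover have "S \<bullet> G = S \<bullet> G' + (u \<bullet> (S *v u)) / G$i$i"
          by (simp add: G'_def inner_diff_right inner_outer_product)
        ultimately show ?thesis using c by simp
      qed
    qed
  qed
  then show ?thesis using G by blast
qed

lemma norm_le_if_variational_inequality:
  fixes x y z :: "'a::real_inner"
  assumes "0 \<le> (y - x) \<bullet> (x - z)"
  shows "norm (x - z) \<le> norm (y - z)"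
proof -
  have "(norm (y - z))\<^sup>2 = (norm (y - x))\<^sup>2 + 2 * ((y - x) \<bullet> (x - z)) + (norm (x - z))\<^sup>2"
    by (simp add: power2_norm_eq_inner algebra_simps inner_commute)
  then have "(norm (x - z))\<^sup>2 \<le> (norm (y - z))\<^sup>2" using assms by simp
  then show ?thesis by (simp add: power2_le_iff_abs_le)
qed

lemma eventually_local_min_along:
  fixes f :: "'a::real_normed_vector \<Rightarrow> real"
  assumes "\<exists>e>0. \<forall>y. norm (y - x) < e \<longrightarrow> f x \<le> f y" and "(p \<longlongrightarrow> x) F"
  shows "\<forall>\<^sub>F t in F. f x \<le> f (p t)"
proof -
  obtain e where "e > 0" and e: "\<And>y. norm (y - x) < e \<Longrightarrow> f x \<le> f y"
    using assms(1) by blast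
  then have "\<forall>\<^sub>F t in F. dist (p t) x < e" using assms(2) tendsto_iff by blast
  then show ?thesis by eventually_elim (simp add: dist_norm e)
qed

lemma inner_nonneg_if_norm_le_perturbation:
  fixes G M :: "'a::real_inner"
  assumes F: "F \<noteq> bot" and a: "(a \<longlongrightarrow> 0) F" and pos: "\<forall>\<^sub>F t in F. 0 < a t"
    and le: "\<forall>\<^sub>F t in F. norm G \<le> norm (G + a t *\<^sub>R M)"
  shows "0 \<le> G \<bullet> M"
proof -
  have "\<forall>\<^sub>F t in F. 0 \<le> 2 * (G \<bullet> M) + a t * (M \<bullet> M)"
    using pos le
  proof eventually_elim
    case (elim t)
    then have "0 \<le> a t * (2 * (G \<bullet> M) + a t * (M \<bullet> M))"
      by (simp add: norm_le algebra_simps inner_commute power2_eq_square)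
    then show ?case using elim(1) by (simp add: zero_le_mult_iff)
  qed
  moreover have "((\<lambda>t. 2 * (G \<bullet> M) + a t * (M \<bullet> M)) \<longlongrightarrow> 2 * (G \<bullet> M)) F"
    using a by (auto intro!: tendsto_eq_intros)
  ultimately have "0 \<le> 2 * (G \<bullet> M)" using F by (metis tendsto_lowerbound)
  then show ?thesis by simp
qed

lemma gram_add_outer_product:
  fixes V :: "real^'r^'n"
  assumes "V *v w = 0"
  shows "(V + t *\<^sub>R outer_product x w) ** transpose (V + t *\<^sub>R outer_product x w)
       = V ** transpose V + (t\<^sup>2 * (w \<bullet> w)) *\<^sub>R outer_product x x"
proof -
  have kernel: "(\<Sum>k\<in>UNIV. w$k * V$a$k) = 0" for a
    using assms by (simp add: vec_eq_iff matrix_vector_mult_def mult.commute)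
  have "(\<Sum>k\<in>UNIV. (V$a$k + t * (x$a * w$k)) * (V$b$k + t * (x$b * w$k)))
      = (\<Sum>k\<in>UNIV. V$a$k * V$b$k) + (t * x$b) * (\<Sum>k\<in>UNIV. V$a$k * w$k)
        + (t * x$a) * (\<Sum>k\<in>UNIV. V$b$k * w$k) + (t\<^sup>2 * (x$a * x$b)) * (\<Sum>k\<in>UNIV. w$k * w$k)"
    for a b
    by (simp add: sum.distrib sum_distrib_left algebra_simps power2_eq_square)
  then show ?thesis
    by (simp add: vec_eq_iff matrix_matrix_mult_def transpose_def inner_vec_def kernel mult_ac)
qed

lemma fobj_le_iff:
  "fobj S0 V \<le> fobj S0 W \<longleftrightarrow> norm (V ** transpose V - S0) \<le> norm (W ** transpose W - S0)"
  by (simp add: fobj_def frob_norm_eq_norm)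

lemma transpose_diff: "transpose (A - B) = transpose A - transpose B"
  by (simp add: vec_eq_iff transpose_def)

lemma psd_residual_if_local_min_nontrivial_kernel:
  fixes S0 :: "real^'n^'n" and Vh :: "real^'r^'n"
  assumes S0: "transpose S0 = S0"
    and min: "\<exists>e>0. \<forall>V. norm (V - Vh) < e \<longrightarrow> fobj S0 Vh \<le> fobj S0 V"
    and w: "Vh *v w = 0" "w \<noteq> 0"
  shows "psd (Vh ** transpose Vh - S0)"
  unfolding psd_def
proof (intro conjI allI)
  show "transpose (Vh ** transpose Vh - S0) = Vh ** transpose Vh - S0"
    using psd_gram[of Vh] S0 by (simp add: psd_def transpose_diff)
next
  fix x :: "real^'n"
  define G where "G = Vh ** transpose Vh - S0"
  (* along the direction x w^T the cross terms of the Gram matrix vanish, as Vh w = 0 *)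
  have "\<forall>\<^sub>F t in at_right 0. fobj S0 Vh \<le> fobj S0 (Vh + t *\<^sub>R outer_product x w)"
    using min by (rule eventually_local_min_along) (auto intro!: tendsto_eq_intros)
  then have "\<forall>\<^sub>F t in at_right 0. norm G \<le> norm (G + (t\<^sup>2 * (w \<bullet> w)) *\<^sub>R outer_product x x)"
    by (simp add: fobj_le_iff gram_add_outer_product[OF w(1)] G_def algebra_simps)
  moreover have "\<forall>\<^sub>F t in at_right 0. 0 < t\<^sup>2 * (w \<bullet> w)"
    using eventually_at_right_less[of "0::real"] by (rule eventually_mono) (simp add: w(2))
  ultimately have "0 \<le> G \<bullet> outer_product x x"
    by (intro inner_nonneg_if_norm_le_perturbation[where F = "at_right 0"])
      (auto intro!: tendsto_eq_intros)
  then show "0 \<le> x \<bullet> ((Vh ** transpose Vh - S0) *v x)"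
    by (simp add: inner_outer_product G_def)
qed

lemma residual_inner_gram_nonpos_if_local_min:
  fixes S0 :: "real^'n^'n" and Vh :: "real^'r^'n"
  assumes min: "\<exists>e>0. \<forall>V. norm (V - Vh) < e \<longrightarrow> fobj S0 Vh \<le> fobj S0 V"
  shows "(Vh ** transpose Vh - S0) \<bullet> (Vh ** transpose Vh) \<le> 0"
proof -
  define Sh where "Sh = Vh ** transpose Vh"
  have gram: "((1 - t) *\<^sub>R Vh) ** transpose ((1 - t) *\<^sub>R Vh) - S0
      = (Sh - S0) + (2 * t - t\<^sup>2) *\<^sub>R (- Sh)" for t :: real
    by (simp add: Sh_def transpose_scalar matrix_scalar_ac flip: scalar_matrix_assoc)
      (simp add: algebra_simps power2_eq_square)
  have "\<forall>\<^sub>F t in at_right 0. fobj S0 Vh \<le> fobj S0 ((1 - t) *\<^sub>R Vh)"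
    using min by (rule eventually_local_min_along) (auto intro!: tendsto_eq_intros)
  then have "\<forall>\<^sub>F t in at_right 0. norm (Sh - S0) \<le> norm ((Sh - S0) + (2 * t - t\<^sup>2) *\<^sub>R (- Sh))"
    by (simp add: fobj_le_iff gram Sh_def)
  moreover have "\<forall>\<^sub>F t in at_right 0. 0 < 2 * t - (t::real)\<^sup>2"
    using eventually_at_right_real[OF zero_less_one] by (rule eventually_mono) (simp add: power2_eq_square)
  ultimately have "0 \<le> (Sh - S0) \<bullet> (- Sh)"
    by (intro inner_nonneg_if_norm_le_perturbation[where F = "at_right 0"])
      (auto intro!: tendsto_eq_intros)
  then show ?thesis by (simp add: Sh_def)
qed

lemma rank_gram: "rank ((V::real^'r^'n) ** transpose V) = rank V"
proof (rule antisym)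
  show "rank (V ** transpose V) \<le> rank V" by (rule rank_mul_le_left)
next
  let ?R = "range ((*v) (transpose V))"
  have "subspace ?R"
    by (rule linear_subspace_image[OF matrix_vector_mul_linear subspace_UNIV])
  then have span_R: "span ?R = ?R" by simp
  (* V (V^T y) = 0 forces |V^T y|^2 = y \<bullet> V (V^T y) = 0 *)
  have "transpose V *v y = 0" if "V *v (transpose V *v y) = 0" for y
  proof -
    have "(transpose V *v y) \<bullet> (transpose V *v y) = y \<bullet> (V *v (transpose V *v y))"
      by (metis dot_lmul_matrix transpose_matrix_vector)
    then show ?thesis using that by simp
  qed
  then have "inj_on ((*v) V) (span ?R)"
    unfolding span_R using \<open>subspace ?R\<close>
    by (auto simp: linear_inj_on_iff_eq_0[OF matrix_vector_mul_linear] simp del: transpose_matrix_vector)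
  then have "dim ((*v) V ` ?R) = dim ?R"
    by (rule dim_image_eq[OF matrix_vector_mul_linear])
  moreover have "(*v) V ` ?R = range ((*v) (V ** transpose V))"
    by (auto simp: image_image matrix_vector_mul_assoc simp del: transpose_matrix_vector)
  ultimately have "rank (V ** transpose V) = rank (transpose V)"
    by (simp only: rank_dim_range)
  then show "rank V \<le> rank (V ** transpose V)" by (simp add: rank_transpose)
qed

lemma norm_le_on_psd_if_residual_psd:
  fixes Sh S0 S :: "real^'n^'n"
  assumes "psd (Sh - S0)" and "(Sh - S0) \<bullet> Sh \<le> 0" and "psd S"
  shows "norm (Sh - S0) \<le> norm (S - S0)"
proof (rule norm_le_if_variational_inequality)
  have "0 \<le> S \<bullet> (Sh - S0)" using assms(3,1) by (rule psd_inner_nonneg)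
  then show "0 \<le> (S - Sh) \<bullet> (Sh - S0)"
    using assms(2) by (simp add: inner_diff_left inner_commute)
qed

theorem theorem1:
  fixes S0 :: "real^'n^'n" and Vh :: "real^'r^'n"
  assumes "CARD('n) \<ge> 2" and "CARD('r) < CARD('n)"
    and "transpose S0 = S0"
    and "\<exists>e>0. \<forall>V :: real^'r^'n. frob_norm (V - Vh) < e \<longrightarrow> fobj S0 Vh \<le> fobj S0 V"
    and "rank (Vh ** transpose Vh) < CARD('r)"
  shows "(\<forall>V :: real^'r^'n. fobj S0 Vh \<le> fobj S0 V)
     \<and> psd (Vh ** transpose Vh)
     \<and> (\<forall>S. psd S \<longrightarrow> (frob_norm (Vh ** transpose Vh - S0))^2 \<le> (frob_norm (S - S0))^2)
     \<and> rank (Vh ** transpose Vh) \<le> CARD('r)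
     \<and> (\<forall>S. psd S \<and> rank S \<le> CARD('r) \<longrightarrow>
            (frob_norm (Vh ** transpose Vh - S0))^2 \<le> (frob_norm (S - S0))^2)"
proof -
  let ?Sh = "Vh ** transpose Vh"
  have min: "\<exists>e>0. \<forall>V. norm (V - Vh) < e \<longrightarrow> fobj S0 Vh \<le> fobj S0 V"
    using assms(4) by (simp add: frob_norm_eq_norm)
  obtain w where w: "Vh *v w = 0" "w \<noteq> 0"
    using assms(5) by (metis rank_gram matrix_nonfull_linear_equations_eq less_irrefl)
  have "psd (?Sh - S0)"
    using assms(3) min w by (rule psd_residual_if_local_min_nontrivial_kernel)
  moreover have "(?Sh - S0) \<bullet> ?Sh \<le> 0"
    using min by (rule residual_inner_gram_nonpos_if_local_min)
  ultimately have opt: "norm (?Sh - S0) \<le> norm (S - S0)" if "psd S" for S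
    using that by (rule norm_le_on_psd_if_residual_psd)
  then have "fobj S0 Vh \<le> fobj S0 V" for V :: "real^'r^'n"
    using psd_gram[of V] by (simp add: fobj_le_iff)
  then show ?thesis
    using opt psd_gram[of Vh] assms(5) by (auto simp: frob_norm_eq_norm intro: power_mono)
qed

end
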